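(* Let $S_r$ be the unilateral right shift on $\ell^2(\mathbb{N})$. Then the family $\{S_r^n\}_{n\in\mathbb{N}}$ is UEC on the closed unit ball of $\ell^2(\mathbb{N})$, whereas the family of adjoints $\{(S_r^* )^n\}_{n\in\mathbb{N}}$ is not UEC on that ball. Consequently, the family of maps $A\mapsto AS_r^n$ ($n\in\mathbb{N}$) on the closed unit ball of $B(\ell^2(\mathbb{N}))$ is not UEC, even though $\{S_r^n\}_{n\in\mathbb{N}}$ is UEC.
   Context: The closed unit ball $H_1$ of a separable Hilbert space $H$ carries the weak uniformity (induced by $\rho(x,y)=\sum_{i\ge1}2^{-i}|\langle x-y,h_i\rangle|$ for a dense sequence $(h_i)$ in $H_1$), and the closed unit ball $B_1$ of $B(H)$ carries the weak operator uniformity (induced by $d(A,B)=\sum_{i,j\ge1}2^{-i-j}|\langle (A-B)h_i,h_j\rangle|$). A family $\mathcal{F}$ of maps from a metric space $(X,d)$ to itself is uniformly equicontinuous (UEC) if for every $\epsilon>0$ there is $\delta>0$ such that $d(x,y)<\delta$ implies $d(f(x),f(y))<\epsilon$ for all $f\in\mathcal{F}$, $x,y\in X$. *)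

theory Defs
  imports Complex_Main
begin

definition l2 :: "(nat \<Rightarrow> complex) set" where
  "l2 = {x. summable (\<lambda>n. (cmod (x n))\<^sup>2)}"

definition l2inner :: "(nat \<Rightarrow> complex) \<Rightarrow> (nat \<Rightarrow> complex) \<Rightarrow> complex" where
  "l2inner x y = (\<Sum>n. x n * cnj (y n))"

definition l2norm :: "(nat \<Rightarrow> complex) \<Rightarrow> real" where
  "l2norm x = sqrt (\<Sum>n. (cmod (x n))\<^sup>2)"

definition ball1 :: "(nat \<Rightarrow> complex) set" where
  "ball1 = {x \<in> l2. l2norm x \<le> 1}"

definition dense_seq :: "(nat \<Rightarrow> nat \<Rightarrow> complex) \<Rightarrow> bool" where
  "dense_seq h \<longleftrightarrow> (\<forall>i. h i \<in> ball1) \<and>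
     (\<forall>x\<in>ball1. \<forall>e>0. \<exists>i. l2norm (\<lambda>n. x n - h i n) < e)"

text \<open>Metric inducing the weak uniformity on H_1 (index i starts at 0, weight 2^-(i+1)).\<close>
definition wdist :: "(nat \<Rightarrow> nat \<Rightarrow> complex) \<Rightarrow> (nat \<Rightarrow> complex) \<Rightarrow> (nat \<Rightarrow> complex) \<Rightarrow> real" where
  "wdist h x y = (\<Sum>i. (1/2) ^ Suc i * cmod (l2inner (\<lambda>n. x n - y n) (h i)))"

definition opball1 :: "((nat \<Rightarrow> complex) \<Rightarrow> (nat \<Rightarrow> complex)) set" where
  "opball1 = {A. (\<forall>x\<in>l2. A x \<in> l2) \<and> (\<forall>x. x \<notin> l2 \<longrightarrow> A x = (\<lambda>n. 0)) \<and>
     (\<forall>x\<in>l2. \<forall>y\<in>l2. A (\<lambda>n. x n + y n) = (\<lambda>n. A x n + A y n)) \<and>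
     (\<forall>x\<in>l2. \<forall>c. A (\<lambda>n. c * x n) = (\<lambda>n. c * A x n)) \<and>
     (\<forall>x\<in>l2. l2norm (A x) \<le> l2norm x)}"

text \<open>Metric inducing the weak operator uniformity on B_1.\<close>
definition wodist :: "(nat \<Rightarrow> nat \<Rightarrow> complex) \<Rightarrow> ((nat \<Rightarrow> complex) \<Rightarrow> (nat \<Rightarrow> complex))
    \<Rightarrow> ((nat \<Rightarrow> complex) \<Rightarrow> (nat \<Rightarrow> complex)) \<Rightarrow> real" where
  "wodist h A B = (\<Sum>i. \<Sum>j. (1/2) ^ (Suc i + Suc j) * cmod (l2inner (\<lambda>n. A (h i) n - B (h i) n) (h j)))"

definition uec :: "'a set \<Rightarrow> ('a \<Rightarrow> 'a \<Rightarrow> real) \<Rightarrow> (nat \<Rightarrow> 'a \<Rightarrow> 'a) \<Rightarrow> bool" where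
  "uec X d F \<longleftrightarrow> (\<forall>e>0. \<exists>\<delta>>0. \<forall>n. \<forall>x\<in>X. \<forall>y\<in>X. d x y < \<delta> \<longrightarrow> d (F n x) (F n y) < e)"

definition shift_r :: "(nat \<Rightarrow> complex) \<Rightarrow> (nat \<Rightarrow> complex)" where
  "shift_r x = (\<lambda>n. if n = 0 then 0 else x (n - 1))"

definition shift_l :: "(nat \<Rightarrow> complex) \<Rightarrow> (nat \<Rightarrow> complex)" where
  "shift_l x = (\<lambda>n. x (Suc n))"

end

theory Submission
  imports Defs "HOL-Analysis.Analysis"
begin

(* The weak distance of S_r^n x and S_r^n y is a weighted sum of |<x - y, S_l^n h_i>|.
   The first I terms are controlled uniformly in n because the probes S_l^n h_i stay in a
   norm-compact set: for large n they are norm-small (S_l^n g \<rightarrow> 0), and the finitely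
   many remaining ones are approximated by finitely many h_j, on which weak closeness of
   x and y gives control; the tail of the sum is geometrically small.

   For the negative parts, a general criterion (pairs getting closer whose images stay
   apart) is applied to the basis vectors e_m versus 0 for S_l^m, and to the rank-one
   operators x \<mapsto> x_m e_0 versus 0 for right multiplication by S_r^m.  Both rest on the
   weights W_p = \<Sum>_i 2^-(i+1) |h_i(p)| = wdist(e_p, 0), which tend to 0 (Tannery) while
   W_0 > 0 by density. *)

text \<open>Products of coordinates of two l2 vectors are absolutely summable (AM-GM).\<close>
lemma l2_summable_products:
  assumes "a \<in> l2" "b \<in> l2"
  shows "summable (\<lambda>n. cmod (a n) * cmod (b n))"
proof -
  have "summable (\<lambda>n. ((cmod (a n))\<^sup>2 + (cmod (b n))\<^sup>2) / 2)"
    using assms by (intro summable_divide summable_add) (auto simp: l2_def)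
  then show ?thesis
    by (rule summable_comparison_test')
       (use sum_squares_bound[of "cmod (a n)" "cmod (b n)" for n] in \<open>auto simp: field_simps\<close>)
qed

lemma l2_diff: "x \<in> l2 \<Longrightarrow> y \<in> l2 \<Longrightarrow> (\<lambda>n. x n - y n) \<in> l2"
proof -
  assume x: "x \<in> l2" and y: "y \<in> l2"
  have "(cmod (x n - y n))\<^sup>2 \<le> 2 * (cmod (x n))\<^sup>2 + 2 * (cmod (y n))\<^sup>2" for n
  proof -
    have "(cmod (x n - y n))\<^sup>2 \<le> (cmod (x n) + cmod (y n))\<^sup>2"
      by (intro power_mono norm_triangle_ineq4) auto
    also have "\<dots> \<le> 2 * (cmod (x n))\<^sup>2 + 2 * (cmod (y n))\<^sup>2"
      using sum_squares_bound[of "cmod (x n)" "cmod (y n)"] by (simp add: power2_sum)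
    finally show ?thesis .
  qed
  moreover have "summable (\<lambda>n. 2 * (cmod (x n))\<^sup>2 + 2 * (cmod (y n))\<^sup>2)"
    using x y by (intro summable_add summable_mult) (auto simp: l2_def)
  ultimately show ?thesis
    unfolding l2_def by (auto intro: summable_comparison_test')
qed

lemma l2_add: "x \<in> l2 \<Longrightarrow> y \<in> l2 \<Longrightarrow> (\<lambda>n. x n + y n) \<in> l2"
  using l2_diff[of x "\<lambda>n. - y n"] by (simp add: l2_def)

lemma l2_scale: "x \<in> l2 \<Longrightarrow> (\<lambda>n. c * x n) \<in> l2"
  using summable_mult[of "\<lambda>n. (cmod (x n))\<^sup>2" "(cmod c)\<^sup>2"]
  by (simp add: l2_def norm_mult power_mult_distrib)

lemma l2norm_nonneg: "x \<in> l2 \<Longrightarrow> 0 \<le> l2norm x"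
  unfolding l2norm_def l2_def by (intro real_sqrt_ge_zero suminf_nonneg) auto

lemma l2_partial_norm_le: "x \<in> l2 \<Longrightarrow> sqrt (\<Sum>n<N. (cmod (x n))\<^sup>2) \<le> l2norm x"
  unfolding l2norm_def l2_def by (intro real_sqrt_le_mono sum_le_suminf) auto

lemma l2_coord_le: "x \<in> l2 \<Longrightarrow> cmod (x p) \<le> l2norm x"
proof -
  assume x: "x \<in> l2"
  have "sqrt ((cmod (x p))\<^sup>2) \<le> sqrt (\<Sum>k<Suc p. (cmod (x k))\<^sup>2)"
    by (intro real_sqrt_le_mono member_le_sum) auto
  also have "\<dots> \<le> l2norm x" using l2_partial_norm_le[OF x] .
  finally show ?thesis by simp
qed

lemma ball1_l2: "x \<in> ball1 \<Longrightarrow> x \<in> l2"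
  by (simp add: ball1_def)

lemma ball1_norm: "x \<in> ball1 \<Longrightarrow> l2norm x \<le> 1"
  by (simp add: ball1_def)

lemma zero_ball1: "(\<lambda>k. 0::complex) \<in> ball1"
  by (simp add: ball1_def l2_def l2norm_def)

lemma l2inner_summable: "a \<in> l2 \<Longrightarrow> b \<in> l2 \<Longrightarrow> summable (\<lambda>n. a n * cnj (b n))"
  by (rule summable_norm_cancel) (simp add: norm_mult l2_summable_products)

lemma l2inner_cauchy_schwarz:
  assumes a: "a \<in> l2" and b: "b \<in> l2"
  shows "cmod (l2inner a b) \<le> l2norm a * l2norm b"
proof -
  have "cmod (l2inner a b) \<le> (\<Sum>n. cmod (a n) * cmod (b n))"
    unfolding l2inner_def
    using summable_norm[of "\<lambda>n. a n * cnj (b n)"] l2_summable_products[OF a b]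
    by (simp add: norm_mult)
  also have "\<dots> \<le> l2norm a * l2norm b"
  proof (rule suminf_le_const[OF l2_summable_products[OF a b]])
    fix N
    have "(\<Sum>n<N. cmod (a n) * cmod (b n))
        \<le> L2_set (\<lambda>n. cmod (a n)) {..<N} * L2_set (\<lambda>n. cmod (b n)) {..<N}"
      using L2_set_mult_ineq[of "\<lambda>n. cmod (a n)" "\<lambda>n. cmod (b n)" "{..<N}"] by simp
    also have "\<dots> \<le> l2norm a * l2norm b"
      unfolding L2_set_def
      by (intro mult_mono l2_partial_norm_le a b l2norm_nonneg real_sqrt_ge_zero sum_nonneg)
         auto
    finally show "(\<Sum>n<N. cmod (a n) * cmod (b n)) \<le> l2norm a * l2norm b" .
  qed
  finally show ?thesis .
qed

lemma l2inner_diff_left: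
  assumes "a \<in> l2" "b \<in> l2" "c \<in> l2"
  shows "l2inner (\<lambda>n. a n - b n) c = l2inner a c - l2inner b c"
proof -
  have "(\<lambda>n. (a n - b n) * cnj (c n)) = (\<lambda>n. a n * cnj (c n) - b n * cnj (c n))"
    by (simp add: algebra_simps)
  then show ?thesis
    unfolding l2inner_def
    using suminf_diff[OF l2inner_summable[OF assms(1,3)] l2inner_summable[OF assms(2,3)]] by simp
qed

lemma l2inner_diff_right:
  assumes "a \<in> l2" "b \<in> l2" "c \<in> l2"
  shows "l2inner a (\<lambda>n. b n - c n) = l2inner a b - l2inner a c"
proof -
  have "(\<lambda>n. a n * cnj (b n - c n)) = (\<lambda>n. a n * cnj (b n) - a n * cnj (c n))"
    by (simp add: algebra_simps)
  then show ?thesis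
    unfolding l2inner_def
    using suminf_diff[OF l2inner_summable[OF assms(1,2)] l2inner_summable[OF assms(1,3)]] by simp
qed

lemma ball1_diff_inner_le:
  assumes x: "x \<in> ball1" and y: "y \<in> ball1" and g: "g \<in> l2"
  shows "cmod (l2inner (\<lambda>n. x n - y n) g) \<le> 2 * l2norm g"
proof -
  have "cmod (l2inner (\<lambda>n. x n - y n) g) = cmod (l2inner x g - l2inner y g)"
    using l2inner_diff_left ball1_l2 x y g by simp
  also have "\<dots> \<le> cmod (l2inner x g) + cmod (l2inner y g)"
    by (rule norm_triangle_ineq4)
  also have "\<dots> \<le> l2norm x * l2norm g + l2norm y * l2norm g"
    using l2inner_cauchy_schwarz ball1_l2 x y g by (intro add_mono) auto
  also have "\<dots> \<le> 1 * l2norm g + 1 * l2norm g"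
    using ball1_norm x y l2norm_nonneg[OF g] by (intro add_mono mult_right_mono) auto
  finally show ?thesis by simp
qed

lemma ball1_diff_inner_perturb:
  assumes x: "x \<in> ball1" and y: "y \<in> ball1" and g: "g \<in> l2" and g': "g' \<in> l2"
  shows "cmod (l2inner (\<lambda>n. x n - y n) g)
    \<le> cmod (l2inner (\<lambda>n. x n - y n) g') + 2 * l2norm (\<lambda>n. g n - g' n)"
proof -
  let ?z = "\<lambda>n. x n - y n"
  have z: "?z \<in> l2" using l2_diff ball1_l2 x y by blast
  have "l2inner ?z g = l2inner ?z g' + l2inner ?z (\<lambda>n. g n - g' n)"
    using l2inner_diff_right[OF z g g'] by simp
  then have "cmod (l2inner ?z g) \<le> cmod (l2inner ?z g') + cmod (l2inner ?z (\<lambda>n. g n - g' n))"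
    by (simp add: norm_triangle_ineq)
  then show ?thesis
    using ball1_diff_inner_le[OF x y l2_diff[OF g g']] by simp
qed

section \<open>Shifts\<close>

lemma shift_r_pow: "(shift_r ^^ n) x = (\<lambda>k. if k < n then 0 else x (k - n))"
  by (induction n) (auto simp: shift_r_def fun_eq_iff)

lemma shift_l_pow: "(shift_l ^^ n) x = (\<lambda>k. x (k + n))"
  by (induction n) (auto simp: shift_l_def)

text \<open>The left shift is the adjoint of the right shift (as an identity of formal series).\<close>
lemma shift_r_adjoint: "l2inner (shift_r x) y = l2inner x (shift_l y)"
proof -
  have "(\<lambda>n. shift_r x (Suc n) * cnj (y (Suc n))) = (\<lambda>n. x n * cnj (shift_l y n))"
    by (simp add: shift_r_def shift_l_def)
  then have "(sums) (\<lambda>n. shift_r x n * cnj (y n)) = (sums) (\<lambda>n. x n * cnj (shift_l y n))"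
    using sums_Suc_iff[of "\<lambda>n. shift_r x n * cnj (y n)"] by (auto simp: shift_r_def)
  then show ?thesis unfolding l2inner_def suminf_def by simp
qed

lemma shift_r_pow_adjoint: "l2inner ((shift_r ^^ n) x) y = l2inner x ((shift_l ^^ n) y)"
proof (induction n arbitrary: y)
  case (Suc n)
  have "l2inner ((shift_r ^^ Suc n) x) y = l2inner ((shift_r ^^ n) x) (shift_l y)"
    by (simp add: shift_r_adjoint)
  also have "\<dots> = l2inner x ((shift_l ^^ Suc n) y)"
    by (simp only: Suc.IH funpow_Suc_right o_apply)
  finally show ?case .
qed simp

lemma shift_r_pow_l2_iff: "(shift_r ^^ m) x \<in> l2 \<longleftrightarrow> x \<in> l2"
proof (induction m arbitrary: x)
  case (Suc m)
  have "(\<lambda>n. (cmod (shift_r y (Suc n)))\<^sup>2) = (\<lambda>n. (cmod (y n))\<^sup>2)" for y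
    by (simp add: shift_r_def)
  then have "shift_r y \<in> l2 \<longleftrightarrow> y \<in> l2" for y
    unfolding l2_def using summable_Suc_iff[of "\<lambda>n. (cmod (shift_r y n))\<^sup>2"] by simp
  then show ?case by (simp add: Suc.IH)
qed simp

lemma shift_l_pow_l2: "g \<in> l2 \<Longrightarrow> (shift_l ^^ n) g \<in> l2"
  using summable_iff_shift[of "\<lambda>k. (cmod (g k))\<^sup>2" n] by (simp add: shift_l_pow l2_def)

text \<open>Left shifts are contractions, so they map the unit ball into itself.\<close>
lemma shift_l_pow_ball1: "g \<in> ball1 \<Longrightarrow> (shift_l ^^ n) g \<in> ball1"
proof -
  assume g: "g \<in> ball1"
  have s: "summable (\<lambda>k. (cmod (g k))\<^sup>2)" using g by (simp add: ball1_def l2_def)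
  have "(\<Sum>k. (cmod (g (k + n)))\<^sup>2) \<le> (\<Sum>k. (cmod (g k))\<^sup>2)"
    using suminf_split_initial_segment[OF s, of n] sum_nonneg[of "{..<n}" "\<lambda>k. (cmod (g k))\<^sup>2"]
    by simp
  then have "l2norm ((shift_l ^^ n) g) \<le> l2norm g"
    by (simp add: l2norm_def shift_l_pow)
  then show ?thesis using g shift_l_pow_l2[of g n] by (auto simp: ball1_def)
qed

text \<open>Left shifts tend strongly to 0: the norm of S_l^n g is the root of a tail sum.\<close>
lemma shift_l_pow_norm_tendsto_zero:
  assumes "g \<in> l2"
  shows "(\<lambda>n. l2norm ((shift_l ^^ n) g)) \<longlonglongrightarrow> 0"
proof -
  have "(\<lambda>n. \<Sum>k. (cmod (g (k + n)))\<^sup>2) \<longlonglongrightarrow> 0"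
    using suminf_exist_split2 assms by (auto simp: l2_def)
  from tendsto_real_sqrt[OF this] show ?thesis
    by (simp add: l2norm_def shift_l_pow)
qed

section \<open>The weak distance\<close>

lemma geometric_weighted_summable:
  fixes T :: "nat \<Rightarrow> real"
  assumes "\<And>i. 0 \<le> T i \<and> T i \<le> C"
  shows "summable (\<lambda>i. (1/2) ^ Suc i * T i)"
proof (rule summable_comparison_test')
  show "summable (\<lambda>i. C * (1/2::real) ^ Suc i)"
    using sums_summable[OF power_half_series] by (rule summable_mult)
  show "norm ((1/2::real) ^ Suc i * T i) \<le> C * (1/2) ^ Suc i" for i
    using assms[of i] by (simp add: mult.commute mult_right_mono)
qed

lemma geometric_weighted_sum_le:
  fixes T :: "nat \<Rightarrow> real"
  assumes T: "\<And>i. 0 \<le> T i \<and> T i \<le> C" and head: "\<And>i. i < I \<Longrightarrow> T i \<le> \<eta>"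
    and "0 \<le> \<eta>"
  shows "(\<Sum>i. (1/2) ^ Suc i * T i) \<le> \<eta> + C * (1/2) ^ I"
proof -
  define f where "f = (\<lambda>i. (1/2::real) ^ Suc i * T i)"
  have fs: "summable f"
    unfolding f_def by (rule geometric_weighted_summable[OF T])
  have half: "summable (\<lambda>i. (1/2::real) ^ Suc i)" "(\<Sum>i. (1/2::real) ^ Suc i) = 1"
    using power_half_series by (auto simp: sums_iff)
  have "(\<Sum>i<I. f i) \<le> (\<Sum>i<I. (1/2) ^ Suc i) * \<eta>"
    unfolding f_def sum_distrib_right by (intro sum_mono mult_left_mono head) auto
  also have "\<dots> \<le> 1 * \<eta>"
    using sum_le_suminf[OF half(1), of "{..<I}"] half(2) \<open>0 \<le> \<eta>\<close>
    by (intro mult_right_mono) auto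
  finally have hd: "(\<Sum>i<I. f i) \<le> \<eta>" by simp
  have "(\<Sum>k. f (k + I)) \<le> (\<Sum>k. C * (1/2) ^ I * (1/2) ^ Suc k)"
  proof (rule suminf_le)
    show "f (k + I) \<le> C * (1/2) ^ I * (1/2) ^ Suc k" for k
      unfolding f_def using T[of "k + I"] by (simp add: power_add mult_left_mono)
    show "summable (\<lambda>k. f (k + I))"
      using fs by simp
    show "summable (\<lambda>k. C * (1/2::real) ^ I * (1/2) ^ Suc k)"
      using half(1) by (rule summable_mult)
  qed
  also have "\<dots> = C * (1/2) ^ I"
    using suminf_mult[OF half(1), of "C * (1/2) ^ I"] half(2) by simp
  finally have "(\<Sum>k. f (k + I)) \<le> C * (1/2) ^ I" .
  with hd have "suminf f \<le> \<eta> + C * (1/2) ^ I"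
    using suminf_split_initial_segment[OF fs, of I] by linarith
  then show ?thesis by (simp only: f_def)
qed

lemma wdist_term_le:
  assumes h: "\<And>i. h i \<in> ball1" and x: "x \<in> ball1" and y: "y \<in> ball1"
  shows "(1/2) ^ Suc j * cmod (l2inner (\<lambda>k. x k - y k) (h j)) \<le> wdist h x y"
proof -
  have "cmod (l2inner (\<lambda>k. x k - y k) (h i)) \<le> 2" for i
    using ball1_diff_inner_le[OF x y ball1_l2[OF h], of i] ball1_norm[OF h, of i] by linarith
  then have "summable (\<lambda>i. (1/2) ^ Suc i * cmod (l2inner (\<lambda>k. x k - y k) (h i)))"
    by (intro geometric_weighted_summable[where C=2]) auto
  from sum_le_suminf[OF this, of "{j}"] show ?thesis
    unfolding wdist_def by simp
qed

lemma wdist_shift_r_pow: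
  "wdist h ((shift_r ^^ n) x) ((shift_r ^^ n) y) =
   (\<Sum>i. (1/2) ^ Suc i * cmod (l2inner (\<lambda>k. x k - y k) ((shift_l ^^ n) (h i))))"
proof -
  have "(\<lambda>k. (shift_r ^^ n) x k - (shift_r ^^ n) y k) = (shift_r ^^ n) (\<lambda>k. x k - y k)"
    by (simp add: shift_r_pow fun_eq_iff)
  then show ?thesis unfolding wdist_def by (simp add: shift_r_pow_adjoint)
qed

section \<open>Right shifts are uniformly equicontinuous\<close>

lemma dense_seq_finite_approx:
  assumes "dense_seq h" "finite G" "G \<subseteq> ball1" "\<epsilon> > 0"
  shows "\<exists>J. \<forall>g\<in>G. \<exists>j\<le>J. l2norm (\<lambda>k. g k - h j k) < \<epsilon>"
proof -
  have "\<forall>g\<in>G. \<exists>j. l2norm (\<lambda>k. g k - h j k) < \<epsilon>"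
    using assms by (auto simp: dense_seq_def)
  then obtain jf where jf: "\<And>g. g \<in> G \<Longrightarrow> l2norm (\<lambda>k. g k - h (jf g) k) < \<epsilon>"
    by metis
  have "jf g \<le> (\<Sum>g\<in>G. jf g)" if "g \<in> G" for g
    by (intro member_le_sum) (use that \<open>finite G\<close> in auto)
  with jf show ?thesis by blast
qed

lemma shifted_probes_uniformly_controlled:
  assumes dense: "dense_seq h" and \<eta>: "\<eta> > 0"
  shows "\<exists>\<delta>>0. \<forall>n i x y. i < I \<longrightarrow> x \<in> ball1 \<longrightarrow> y \<in> ball1 \<longrightarrow> wdist h x y < \<delta> \<longrightarrow>
           cmod (l2inner (\<lambda>k. x k - y k) ((shift_l ^^ n) (h i))) < \<eta>"
proof -
  have h: "\<And>i. h i \<in> ball1" using dense by (simp add: dense_seq_def)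
  have "\<forall>\<^sub>F n in sequentially. \<forall>i\<in>{..<I}. l2norm ((shift_l ^^ n) (h i)) < \<eta> / 2"
  proof (intro eventually_ball_finite ballI)
    fix i
    show "\<forall>\<^sub>F n in sequentially. l2norm ((shift_l ^^ n) (h i)) < \<eta> / 2"
      by (rule order_tendstoD(2)[OF shift_l_pow_norm_tendsto_zero[OF ball1_l2[OF h]]])
         (use \<eta> in simp)
  qed simp
  then obtain N where far: "\<And>n i. n \<ge> N \<Longrightarrow> i < I \<Longrightarrow> l2norm ((shift_l ^^ n) (h i)) < \<eta> / 2"
    unfolding eventually_sequentially by blast
  define G where "G = (\<lambda>(n, i). (shift_l ^^ n) (h i)) ` ({..<N} \<times> {..<I})"
  have "finite G" "G \<subseteq> ball1"
    using shift_l_pow_ball1[OF h] by (auto simp: G_def)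
  then obtain J where near: "\<forall>g\<in>G. \<exists>j\<le>J. l2norm (\<lambda>k. g k - h j k) < \<eta> / 4"
    using dense_seq_finite_approx[OF dense] \<eta> by (metis divide_pos_pos zero_less_numeral)
  define \<delta> where "\<delta> = \<eta> / 2 * (1/2) ^ Suc J"
  show ?thesis
  proof (intro exI[of _ \<delta>] conjI allI impI)
    show "\<delta> > 0" using \<eta> by (simp add: \<delta>_def)
    fix n i x y
    assume i: "i < I" and x: "x \<in> ball1" and y: "y \<in> ball1" and d: "wdist h x y < \<delta>"
    let ?g = "(shift_l ^^ n) (h i)"
    have g: "?g \<in> l2" using shift_l_pow_l2 ball1_l2[OF h] by blast
    have coord: "cmod (l2inner (\<lambda>k. x k - y k) (h j)) < \<eta> / 2" if "j \<le> J" for j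
    proof -
      have "(1/2) ^ Suc j * cmod (l2inner (\<lambda>k. x k - y k) (h j)) < \<delta>"
        using wdist_term_le[OF h x y] d by (rule le_less_trans)
      also have "\<delta> \<le> \<eta> / 2 * (1/2) ^ Suc j"
        unfolding \<delta>_def using \<eta> that by (intro mult_left_mono power_decreasing) auto
      finally show ?thesis by (simp add: mult.commute)
    qed
    show "cmod (l2inner (\<lambda>k. x k - y k) ?g) < \<eta>"
    proof (cases "n < N")
      case True
      then obtain j where "j \<le> J" and j: "l2norm (\<lambda>k. ?g k - h j k) < \<eta> / 4"
        using near i by (auto simp: G_def)
      then show ?thesis
        using ball1_diff_inner_perturb[OF x y g ball1_l2[OF h[of j]]] coord[OF \<open>j \<le> J\<close>]
        by linarith
    next
      case False
      then show ?thesis using ball1_diff_inner_le[OF x y g] far[of n i] i by simp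
    qed
  qed
qed

theorem uec_shift_r_pow:
  assumes dense: "dense_seq h"
  shows "uec ball1 (wdist h) (\<lambda>n. shift_r ^^ n)"
  unfolding uec_def
proof (intro allI impI)
  fix e :: real
  assume e: "e > 0"
  obtain I where I: "(1/2::real) ^ I < e / 4"
    using real_arch_pow_inv[of "e / 4" "1/2"] e by auto
  obtain \<delta> where "\<delta> > 0" and control:
    "\<And>n i x y. i < I \<Longrightarrow> x \<in> ball1 \<Longrightarrow> y \<in> ball1 \<Longrightarrow> wdist h x y < \<delta> \<Longrightarrow>
       cmod (l2inner (\<lambda>k. x k - y k) ((shift_l ^^ n) (h i))) < e / 4"
    using shifted_probes_uniformly_controlled[OF dense, of "e / 4" I] e by auto
  have h: "\<And>i. h i \<in> ball1" using dense by (simp add: dense_seq_def)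
  show "\<exists>\<delta>>0. \<forall>n. \<forall>x\<in>ball1. \<forall>y\<in>ball1. wdist h x y < \<delta> \<longrightarrow>
          wdist h ((shift_r ^^ n) x) ((shift_r ^^ n) y) < e"
  proof (intro exI[of _ \<delta>] conjI \<open>\<delta> > 0\<close> allI ballI impI)
    fix n x y
    assume x: "x \<in> ball1" and y: "y \<in> ball1" and d: "wdist h x y < \<delta>"
    have bound: "0 \<le> cmod (l2inner (\<lambda>k. x k - y k) ((shift_l ^^ n) (h i)))
        \<and> cmod (l2inner (\<lambda>k. x k - y k) ((shift_l ^^ n) (h i))) \<le> 2" for i
      using ball1_diff_inner_le[OF x y ball1_l2[OF shift_l_pow_ball1[OF h]], of n i]
        ball1_norm[OF shift_l_pow_ball1[OF h], of n i]
      by simp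
    have "wdist h ((shift_r ^^ n) x) ((shift_r ^^ n) y) \<le> e / 4 + 2 * (1/2) ^ I"
      unfolding wdist_shift_r_pow
      using control[OF _ x y d] e by (intro geometric_weighted_sum_le bound less_imp_le) auto
    with I e show "wdist h ((shift_r ^^ n) x) ((shift_r ^^ n) y) < e" by linarith
  qed
qed

section \<open>A criterion for failure of uniform equicontinuity\<close>

lemma not_uec_by_separated_pairs:
  assumes "\<And>m. x m \<in> X" "\<And>m. y m \<in> X" and "(\<lambda>m. d (x m) (y m)) \<longlonglongrightarrow> 0"
    and "c > 0" and "\<And>m. c \<le> d (F m (x m)) (F m (y m))"
  shows "\<not> uec X d F"
proof
  assume "uec X d F"
  then obtain \<delta> where "\<delta> > 0" and
    uc: "\<And>n a b. a \<in> X \<Longrightarrow> b \<in> X \<Longrightarrow> d a b < \<delta> \<Longrightarrow> d (F n a) (F n b) < c"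
    unfolding uec_def using \<open>c > 0\<close> by meson
  obtain m where "d (x m) (y m) < \<delta>"
    using order_tendstoD(2)[OF assms(3) \<open>\<delta> > 0\<close>] by (auto simp: eventually_sequentially)
  with uc[OF assms(1)[of m] assms(2)[of m], of m] assms(5)[of m] show False by linarith
qed

definition basis :: "nat \<Rightarrow> complex \<Rightarrow> nat \<Rightarrow> complex" where
  "basis p a = (\<lambda>k. if k = p then a else 0)"

text \<open>The weight of coordinate p in the probes; it equals wdist h (basis p 1) 0.\<close>
definition basis_weight :: "(nat \<Rightarrow> nat \<Rightarrow> complex) \<Rightarrow> nat \<Rightarrow> real" where
  "basis_weight h p = (\<Sum>i. (1/2) ^ Suc i * cmod (h i p))"

lemma basis_sq: "(\<lambda>k. (cmod (basis p a k))\<^sup>2) = (\<lambda>k. if k = p then (cmod a)\<^sup>2 else 0)"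
  by (auto simp: basis_def fun_eq_iff)

lemma basis_l2: "basis p a \<in> l2"
  using sums_single[of p "\<lambda>_. (cmod a)\<^sup>2"] by (simp add: l2_def basis_sq sums_iff)

lemma basis_norm: "l2norm (basis p a) = cmod a"
  using sums_single[of p "\<lambda>_. (cmod a)\<^sup>2"] by (simp add: l2norm_def basis_sq sums_iff)

lemma basis_ball1: "basis p 1 \<in> ball1"
  by (simp add: ball1_def basis_l2 basis_norm)

lemma l2inner_basis: "l2inner (basis p a) g = a * cnj (g p)"
proof -
  have "(\<lambda>k. basis p a k * cnj (g k)) = (\<lambda>k. if k = p then a * cnj (g p) else 0)"
    by (auto simp: basis_def)
  then show ?thesis unfolding l2inner_def
    using sums_single[of p "\<lambda>_. a * cnj (g p)"] by (simp add: sums_iff)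
qed

lemma ball1_coord_le: "x \<in> ball1 \<Longrightarrow> cmod (x p) \<le> 1"
  using l2_coord_le[OF ball1_l2] ball1_norm by (rule order_trans)

lemma basis_weight_summable:
  "(\<And>i. h i \<in> ball1) \<Longrightarrow> summable (\<lambda>i. (1/2) ^ Suc i * cmod (h i p))"
  by (intro geometric_weighted_summable[where C=1]) (simp add: ball1_coord_le)

lemma wdist_basis: "wdist h (basis p 1) (\<lambda>k. 0) = basis_weight h p"
  unfolding wdist_def basis_weight_def by (simp add: l2inner_basis)

text \<open>Every probe lies in l2, so its p-th coordinate tends to 0; by dominated convergence
  for series (Tannery's theorem) so does the weight.\<close>
lemma basis_weight_tendsto_zero:
  assumes h: "\<And>i. h i \<in> ball1"
  shows "basis_weight h \<longlonglongrightarrow> 0"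
proof -
  have "(\<lambda>m. cmod (h k m)) \<longlonglongrightarrow> 0" for k
    using tendsto_real_sqrt[OF summable_LIMSEQ_zero[of "\<lambda>m. (cmod (h k m))\<^sup>2"]] h[of k]
    by (simp add: ball1_def l2_def)
  then have lim: "(\<lambda>m. (1/2::real) ^ Suc k * cmod (h k m)) \<longlonglongrightarrow> 0" for k
    by (rule tendsto_mult_right_zero)
  have "norm ((1/2::real) ^ Suc k * cmod (h k m)) \<le> (1/2) ^ Suc k" for k m
    using ball1_coord_le[OF h] by (simp add: mult_left_le)
  then have bound: "\<forall>\<^sub>F (k, m) in at_top \<times>\<^sub>F sequentially.
      norm ((1/2::real) ^ Suc k * cmod (h k m)) \<le> (1/2) ^ Suc k"
    by (intro always_eventually) (auto simp: case_prod_beta)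
  from tannerys_theorem[OF lim bound sums_summable[OF power_half_series]] show ?thesis
    by (simp add: basis_weight_def[abs_def])
qed

text \<open>Some probe is 1-close to e_0, hence has nonzero 0-th coordinate.\<close>
lemma basis_weight_0_pos:
  assumes dense: "dense_seq h"
  shows "0 < basis_weight h 0"
proof -
  have h: "\<And>i. h i \<in> ball1" using dense by (simp add: dense_seq_def)
  obtain i where i: "l2norm (\<lambda>n. basis 0 1 n - h i n) < 1"
    using dense basis_ball1 by (force simp: dense_seq_def)
  have "cmod (basis 0 1 0 - h i 0) \<le> l2norm (\<lambda>n. basis 0 1 n - h i n)"
    using l2_coord_le[OF l2_diff[OF basis_l2 ball1_l2[OF h]]] .
  with i have "h i 0 \<noteq> 0" by (auto simp: basis_def)
  then show ?thesis unfolding basis_weight_def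
    by (intro suminf_pos2[where i=i] basis_weight_summable h) auto
qed

section \<open>Left shifts are not uniformly equicontinuous\<close>

text \<open>e_m is weakly close to 0 for large m, but S_l^m e_m = e_0 is not.\<close>
theorem not_uec_shift_l_pow:
  assumes dense: "dense_seq h"
  shows "\<not> uec ball1 (wdist h) (\<lambda>n. shift_l ^^ n)"
proof (rule not_uec_by_separated_pairs)
  have h: "\<And>i. h i \<in> ball1" using dense by (simp add: dense_seq_def)
  show "(\<lambda>m. wdist h (basis m 1) (\<lambda>k. 0)) \<longlonglongrightarrow> 0"
    unfolding wdist_basis using basis_weight_tendsto_zero[OF h] by simp
  show "basis_weight h 0 \<le> wdist h ((shift_l ^^ m) (basis m 1)) ((shift_l ^^ m) (\<lambda>k. 0))" for m
    using wdist_basis[of h 0] by (simp add: shift_l_pow basis_def)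
qed (use basis_ball1 zero_ball1 basis_weight_0_pos[OF dense] in auto)

section \<open>Right multiplication by right shifts is not uniformly equicontinuous\<close>

definition rank_one :: "nat \<Rightarrow> (nat \<Rightarrow> complex) \<Rightarrow> nat \<Rightarrow> complex" where
  "rank_one m = (\<lambda>x. if x \<in> l2 then basis 0 (x m) else (\<lambda>k. 0))"

lemma rank_one_opball1: "rank_one m \<in> opball1"
proof -
  have "basis 0 (a + b) = (\<lambda>n. basis 0 a n + basis 0 b n)"
    and "basis 0 (c * a) = (\<lambda>n. c * basis 0 a n)" for a b c
    by (auto simp: basis_def)
  then show ?thesis
    unfolding opball1_def rank_one_def
    by (auto simp: basis_l2 l2_add l2_scale basis_norm l2_coord_le)
qed

lemma zero_op_opball1: "(\<lambda>x k. 0) \<in> opball1"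
  unfolding opball1_def using l2norm_nonneg by (auto simp: l2_def l2norm_def)

lemma wodist_to_basis_0:
  assumes h: "\<And>i. h i \<in> ball1"
    and A: "\<And>i. A (h i) = basis 0 (h i p)" and B: "\<And>i. B (h i) = (\<lambda>k. 0)"
  shows "wodist h A B = basis_weight h p * basis_weight h 0"
proof -
  have row: "(\<Sum>j. (1/2::real) ^ (Suc i + Suc j) * cmod (l2inner (\<lambda>n. A (h i) n - B (h i) n) (h j)))
      = (1/2) ^ Suc i * cmod (h i p) * basis_weight h 0" for i
  proof -
    have "(\<lambda>j. (1/2::real) ^ (Suc i + Suc j) * cmod (l2inner (\<lambda>n. A (h i) n - B (h i) n) (h j)))
        = (\<lambda>j. (1/2) ^ Suc i * cmod (h i p) * ((1/2) ^ Suc j * cmod (h j 0)))"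
      by (simp add: A B l2inner_basis norm_mult power_add fun_eq_iff)
    then show ?thesis unfolding basis_weight_def
      by (simp only: suminf_mult[OF basis_weight_summable[OF h, where p=0]])
  qed
  show ?thesis unfolding wodist_def row basis_weight_def
    by (simp only: suminf_mult2[OF basis_weight_summable[OF h, where p=p]])
qed

text \<open>The rank-one maps are weak-operator close to 0 for large m, but composing with
  S_r^m moves the coordinate m back to 0.\<close>
theorem not_uec_right_mult_shift_r_pow:
  assumes dense: "dense_seq h"
  shows "\<not> uec opball1 (wodist h) (\<lambda>n A. A \<circ> (shift_r ^^ n))"
proof (rule not_uec_by_separated_pairs)
  have h: "\<And>i. h i \<in> ball1" using dense by (simp add: dense_seq_def)
  have dist: "wodist h (rank_one m) (\<lambda>x k. 0) = basis_weight h m * basis_weight h 0" for m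
    using h by (intro wodist_to_basis_0) (auto simp: rank_one_def ball1_l2)
  show "(\<lambda>m. wodist h (rank_one m) (\<lambda>x k. 0)) \<longlonglongrightarrow> 0"
    unfolding dist by (intro tendsto_mult_left_zero basis_weight_tendsto_zero h)
  have "(shift_r ^^ m) (h i) \<in> l2" for m i
    using h by (simp add: shift_r_pow_l2_iff ball1_l2)
  then have "wodist h (rank_one m \<circ> (shift_r ^^ m)) ((\<lambda>x k. 0) \<circ> (shift_r ^^ m))
      = basis_weight h 0 * basis_weight h 0" for m
    using h by (intro wodist_to_basis_0) (auto simp: rank_one_def shift_r_pow)
  then show "basis_weight h 0 * basis_weight h 0
      \<le> wodist h (rank_one m \<circ> (shift_r ^^ m)) ((\<lambda>x k. 0) \<circ> (shift_r ^^ m))" for m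
    by simp
qed (use rank_one_opball1 zero_op_opball1 basis_weight_0_pos[OF dense] in auto)

theorem mainTheorem9:
  fixes h :: "nat \<Rightarrow> nat \<Rightarrow> complex"
  assumes "dense_seq h"
  shows "uec ball1 (wdist h) (\<lambda>n. shift_r ^^ n)
    \<and> (\<forall>x\<in>l2. \<forall>y\<in>l2. l2inner (shift_r x) y = l2inner x (shift_l y))
    \<and> \<not> uec ball1 (wdist h) (\<lambda>n. shift_l ^^ n)
    \<and> \<not> uec opball1 (wodist h) (\<lambda>n A. A \<circ> (shift_r ^^ n))"
  using uec_shift_r_pow[OF assms] shift_r_adjoint not_uec_shift_l_pow[OF assms]
    not_uec_right_mult_shift_r_pow[OF assms]
  by blast

end
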